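(* Let $\Sigma=(\mathbb{N}_0,X,U,\mathscr{U},\phi)$ be a control system as in the standing setup and let $Q\subset X$ be a nonempty compact set. Then $Q$ is finitely equi-invariant if and only if $Q$ has bounded invariance complexity.
   Context: Standing setup: $(X,d)$ is a metric space, $U$ is a compact metric space, and $F:X\times U\to X$ is a map such that $F_u:=F(\cdot,u)$ is continuous for every $u\in U$. Let $\mathscr U=U^{\mathbb N_0}$ with the product topology. For $\omega=(\omega_0,\omega_1,\dots)\in\mathscr U$, $x\in X$, set $\phi(0,x,\omega)=x$ and $\phi(k,x,\omega)=F_{\omega_{k-1}}\circ\cdots\circ F_{\omega_0}(x)$ for $k\ge1$. It is assumed that $\phi:\mathbb N_0\times X\times\mathscr U\to X$ is continuous. Notation: $\mathbb N=\{1,2,\dots\}$, $\mathbb N_0=\{0,1,2,\dots\}$; $B(x,\delta)$ is the open ball; $d(y,Q)=\inf_{q\in Q}d(y,q)$; $B_\varepsilon(Q)=\{y\in X:d(y,Q)<\varepsilon\}$; for $A\subset\mathbb N_0$, $\phi(A,x,\omega)=\{\phi(k,x,\omega):k\in A\}$. Finite equi-invariance: a point $x\in Q$ is a finitely equi-invariant point of $Q$ if for every $\varepsilon>0$ there exist $\delta>0$ and a finite set $F\subset\mathscr U$ such that for every $y\in B(x,\delta)\cap Q$ there is $\omega\in F$ with $\phi(\mathbb N_0,y,\omega)\subset B_\varepsilon(Q)$. $Q$ is finitely equi-invariant if every point of $Q$ is a finitely equi-invariant point of $Q$. Invariance complexity: for $\omega\in\mathscr U$, $n\in\mathbb N$,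 $\varepsilon>0$ let $Q^\varepsilon_{n,\omega}=\{x\in Q:\phi(\{0,1,\dots,n-1\},x,\omega)\subset B_\varepsilon(Q)\}$. A set $F\subset\mathscr U$ is $(n,\varepsilon,Q)$-spanning if $Q=\bigcup_{\omega\in F}Q^\varepsilon_{n,\omega}$, and $r_{inv}(n,\varepsilon,Q)$ is the minimal cardinality of an $(n,\varepsilon,Q)$-spanning set ($=\infty$ if none exists). $Q$ has bounded invariance complexity if for every $\varepsilon>0$ there is $C>0$ with $r_{inv}(n,\varepsilon,Q)\le C$ for all $n\in\mathbb N$. *)

theory Defs
  imports "HOL-Analysis.Analysis" "HOL-Library.Extended_Nat"
begin

definition ctrl_seqs :: "'u set \<Rightarrow> (nat \<Rightarrow> 'u) set" where
  "ctrl_seqs U = {\<omega>. \<forall>n. \<omega> n \<in> U}"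

fun phi :: "('u \<Rightarrow> 'a \<Rightarrow> 'a) \<Rightarrow> nat \<Rightarrow> 'a \<Rightarrow> (nat \<Rightarrow> 'u) \<Rightarrow> 'a" where
  "phi F 0 x \<omega> = x"
| "phi F (Suc k) x \<omega> = F (\<omega> k) (phi F k x \<omega>)"

definition nbhd :: "real \<Rightarrow> 'a::metric_space set \<Rightarrow> 'a set" where
  "nbhd \<epsilon> Q = {y. infdist y Q < \<epsilon>}"

definition fin_equi_inv_point ::
  "('u \<Rightarrow> 'a \<Rightarrow> 'a) \<Rightarrow> 'u set \<Rightarrow> 'a::metric_space set \<Rightarrow> 'a \<Rightarrow> bool" where
  "fin_equi_inv_point F U Q x \<longleftrightarrow> x \<in> Q \<and>
     (\<forall>\<epsilon>>0. \<exists>\<delta>>0. \<exists>S. finite S \<and> S \<subseteq> ctrl_seqs U \<and>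
        (\<forall>y \<in> ball x \<delta> \<inter> Q. \<exists>\<omega>\<in>S. (\<lambda>k. phi F k y \<omega>) ` UNIV \<subseteq> nbhd \<epsilon> Q))"

definition fin_equi_inv ::
  "('u \<Rightarrow> 'a \<Rightarrow> 'a) \<Rightarrow> 'u set \<Rightarrow> 'a::metric_space set \<Rightarrow> bool" where
  "fin_equi_inv F U Q \<longleftrightarrow> (\<forall>x\<in>Q. fin_equi_inv_point F U Q x)"

definition Qset ::
  "('u \<Rightarrow> 'a \<Rightarrow> 'a) \<Rightarrow> 'a::metric_space set \<Rightarrow> nat \<Rightarrow> real \<Rightarrow> (nat \<Rightarrow> 'u) \<Rightarrow> 'a set" where
  "Qset F Q n \<epsilon> \<omega> = {x \<in> Q. (\<lambda>k. phi F k x \<omega>) ` {0..<n} \<subseteq> nbhd \<epsilon> Q}"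

definition spanning ::
  "('u \<Rightarrow> 'a \<Rightarrow> 'a) \<Rightarrow> 'u set \<Rightarrow> nat \<Rightarrow> real \<Rightarrow> 'a::metric_space set \<Rightarrow> (nat \<Rightarrow> 'u) set \<Rightarrow> bool" where
  "spanning F U n \<epsilon> Q S \<longleftrightarrow> S \<subseteq> ctrl_seqs U \<and> Q = (\<Union>\<omega>\<in>S. Qset F Q n \<epsilon> \<omega>)"

text \<open>Minimal cardinality of an (n,eps,Q)-spanning set; infinity if no finite one exists.\<close>
definition r_inv ::
  "('u \<Rightarrow> 'a \<Rightarrow> 'a) \<Rightarrow> 'u set \<Rightarrow> nat \<Rightarrow> real \<Rightarrow> 'a::metric_space set \<Rightarrow> enat" where
  "r_inv F U n \<epsilon> Q = (INF S \<in> {S. finite S \<and> spanning F U n \<epsilon> Q S}. enat (card S))"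

definition bounded_inv_complexity ::
  "('u \<Rightarrow> 'a \<Rightarrow> 'a) \<Rightarrow> 'u set \<Rightarrow> 'a::metric_space set \<Rightarrow> bool" where
  "bounded_inv_complexity F U Q \<longleftrightarrow>
     (\<forall>\<epsilon>>0. \<exists>C::real. C > 0 \<and> (\<forall>n\<ge>1. r_inv F U n \<epsilon> Q \<noteq> \<infinity> \<and> real (the_enat (r_inv F U n \<epsilon> Q)) \<le> C))"

end

theory Submission
  imports Defs
begin

text \<open>
  If Q is finitely equi-invariant, compactness of Q reduces the local finite control sets to
  finitely many, and their union is a single finite set of controls keeping every orbit from Q
  in the \<open>\<epsilon>\<close>-neighbourhood forever; in particular it spans for every horizon.

  Conversely, suppose that for every horizon n at most N controls suffice. Pack N control
  sequences into one element of the compact space \<open>U\<^sup>\<nat>\<close>. The packings that work up to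
  horizon n form a decreasing sequence of nonempty closed sets, so some packing works for all
  horizons simultaneously. For each point of Q one of its N components is then good up to
  every horizon, hence forever, which gives finite equi-invariance with a single finite set.
\<close>

definition invariance_cover ::
  "('u \<Rightarrow> 'a \<Rightarrow> 'a) \<Rightarrow> 'u set \<Rightarrow> real \<Rightarrow> 'a::metric_space set \<Rightarrow> (nat \<Rightarrow> 'u) set \<Rightarrow> bool" where
  "invariance_cover F U \<epsilon> Q S \<longleftrightarrow>
     S \<subseteq> ctrl_seqs U \<and> (\<forall>y\<in>Q. \<exists>\<omega>\<in>S. range (\<lambda>k. phi F k y \<omega>) \<subseteq> nbhd \<epsilon> Q)"

lemma fin_equi_inv_imp_invariance_cover:
  fixes Q :: "'a::metric_space set"
  assumes "compact Q" "fin_equi_inv F U Q" "\<epsilon> > 0"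
  shows "\<exists>S. finite S \<and> invariance_cover F U \<epsilon> Q S"
proof -
  have "\<forall>x\<in>Q. \<exists>\<delta>>0. \<exists>S. finite S \<and> S \<subseteq> ctrl_seqs U \<and>
      (\<forall>y \<in> ball x \<delta> \<inter> Q. \<exists>\<omega>\<in>S. range (\<lambda>k. phi F k y \<omega>) \<subseteq> nbhd \<epsilon> Q)"
    using assms(2,3) unfolding fin_equi_inv_def fin_equi_inv_point_def by blast
  then obtain \<delta> S where local: "\<And>x. x \<in> Q \<Longrightarrow> \<delta> x > 0 \<and> finite (S x) \<and> S x \<subseteq> ctrl_seqs U \<and>
      (\<forall>y \<in> ball x (\<delta> x) \<inter> Q. \<exists>\<omega>\<in>S x. range (\<lambda>k. phi F k y \<omega>) \<subseteq> nbhd \<epsilon> Q)"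
    by metis
  have "Q \<subseteq> (\<Union>x\<in>Q. ball x (\<delta> x))"
    using local by force
  then obtain T where T: "T \<subseteq> Q" "finite T" "Q \<subseteq> (\<Union>x\<in>T. ball x (\<delta> x))"
    using compactE_image[OF assms(1), of Q "\<lambda>x. ball x (\<delta> x)"] by auto
  have "finite (\<Union>x\<in>T. S x)"
    using T local by blast
  moreover have "invariance_cover F U \<epsilon> Q (\<Union>x\<in>T. S x)"
    unfolding invariance_cover_def
  proof
    show "(\<Union>x\<in>T. S x) \<subseteq> ctrl_seqs U"
      using T local by blast
    show "\<forall>y\<in>Q. \<exists>\<omega>\<in>(\<Union>x\<in>T. S x). range (\<lambda>k. phi F k y \<omega>) \<subseteq> nbhd \<epsilon> Q"
    proof
      fix y assume y: "y \<in> Q"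
      then obtain x where "x \<in> T" "y \<in> ball x (\<delta> x)"
        using T by blast
      then show "\<exists>\<omega>\<in>(\<Union>x\<in>T. S x). range (\<lambda>k. phi F k y \<omega>) \<subseteq> nbhd \<epsilon> Q"
        using local[of x] T y by blast
    qed
  qed
  ultimately show ?thesis
    by blast
qed

lemma invariance_covers_imp_fin_equi_inv:
  assumes "\<forall>\<epsilon>>0. \<exists>S. finite S \<and> invariance_cover F U \<epsilon> Q S"
  shows "fin_equi_inv F U Q"
  unfolding fin_equi_inv_def fin_equi_inv_point_def
proof (intro ballI conjI allI impI)
  fix x and \<epsilon> :: real assume "\<epsilon> > 0"
  then obtain S where "finite S" "invariance_cover F U \<epsilon> Q S"
    using assms by blast
  then show "\<exists>\<delta>>0. \<exists>S. finite S \<and> S \<subseteq> ctrl_seqs U \<and>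
      (\<forall>y \<in> ball x \<delta> \<inter> Q. \<exists>\<omega>\<in>S. range (\<lambda>k. phi F k y \<omega>) \<subseteq> nbhd \<epsilon> Q)"
    unfolding invariance_cover_def by (intro exI[of _ 1]) auto
qed

lemma spanning_iff_covered:
  "spanning F U n \<epsilon> Q S \<longleftrightarrow> S \<subseteq> ctrl_seqs U \<and> Q \<subseteq> (\<Union>\<omega>\<in>S. Qset F Q n \<epsilon> \<omega>)"
proof -
  have "(\<Union>\<omega>\<in>S. Qset F Q n \<epsilon> \<omega>) \<subseteq> Q"
    unfolding Qset_def by auto
  then show ?thesis
    unfolding spanning_def by (auto simp del: UN_iff)
qed

lemma invariance_cover_imp_spanning:
  "invariance_cover F U \<epsilon> Q S \<Longrightarrow> spanning F U n \<epsilon> Q S"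
proof -
  assume cover: "invariance_cover F U \<epsilon> Q S"
  have "y \<in> (\<Union>\<omega>\<in>S. Qset F Q n \<epsilon> \<omega>)" if "y \<in> Q" for y
  proof -
    obtain \<omega> where "\<omega> \<in> S" "range (\<lambda>k. phi F k y \<omega>) \<subseteq> nbhd \<epsilon> Q"
      using cover \<open>y \<in> Q\<close> unfolding invariance_cover_def by blast
    then show ?thesis
      using \<open>y \<in> Q\<close> unfolding Qset_def by blast
  qed
  then show ?thesis
    using cover unfolding invariance_cover_def spanning_iff_covered by blast
qed

lemma spanning_mono:
  assumes "m \<le> n" "spanning F U n \<epsilon> Q S"
  shows "spanning F U m \<epsilon> Q S"
proof -
  have "Qset F Q n \<epsilon> \<omega> \<subseteq> Qset F Q m \<epsilon> \<omega>" for \<omega>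
    using assms(1) unfolding Qset_def by auto
  then show ?thesis
    using assms(2) unfolding spanning_iff_covered by (meson UN_mono order_refl order_trans)
qed

lemma r_inv_le_card:
  "finite S \<Longrightarrow> spanning F U n \<epsilon> Q S \<Longrightarrow> r_inv F U n \<epsilon> Q \<le> enat (card S)"
  unfolding r_inv_def by (intro INF_lower) auto

lemma r_inv_attained:
  assumes "r_inv F U n \<epsilon> Q \<noteq> \<infinity>"
  shows "\<exists>S. finite S \<and> spanning F U n \<epsilon> Q S \<and> r_inv F U n \<epsilon> Q = enat (card S)"
proof -
  let ?cards = "(\<lambda>S. enat (card S)) ` {S. finite S \<and> spanning F U n \<epsilon> Q S}"
  have "?cards \<noteq> {}"
    using assms unfolding r_inv_def by (metis Inf_empty top_enat_def)
  then have "Inf ?cards \<in> ?cards"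
    by (auto intro: wellorder_InfI)
  then obtain S where "finite S" "spanning F U n \<epsilon> Q S" "Inf ?cards = enat (card S)"
    by auto
  then show ?thesis
    unfolding r_inv_def by auto
qed

lemma invariance_covers_imp_bounded_inv_complexity:
  assumes "\<forall>\<epsilon>>0. \<exists>S. finite S \<and> invariance_cover F U \<epsilon> Q S"
  shows "bounded_inv_complexity F U Q"
  unfolding bounded_inv_complexity_def
proof (intro allI impI)
  fix \<epsilon> :: real assume "\<epsilon> > 0"
  then obtain S where S: "finite S" "invariance_cover F U \<epsilon> Q S"
    using assms by blast
  have "r_inv F U n \<epsilon> Q \<noteq> \<infinity> \<and> real (the_enat (r_inv F U n \<epsilon> Q)) \<le> real (card S) + 1" for n
  proof -
    have "r_inv F U n \<epsilon> Q \<le> enat (card S)"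
      using S by (intro r_inv_le_card invariance_cover_imp_spanning)
    then show ?thesis
      by (cases "r_inv F U n \<epsilon> Q") auto
  qed
  then show "\<exists>C::real. C > 0 \<and> (\<forall>n\<ge>1. r_inv F U n \<epsilon> Q \<noteq> \<infinity> \<and> real (the_enat (r_inv F U n \<epsilon> Q)) \<le> C)"
    by (intro exI[of _ "real (card S) + 1"]) auto
qed

lemma bounded_inv_complexity_imp_bounded_spanning:
  assumes "bounded_inv_complexity F U Q" "\<epsilon> > 0"
  shows "\<exists>N. \<forall>n. \<exists>S. finite S \<and> card S \<le> N \<and> spanning F U n \<epsilon> Q S"
proof -
  obtain C :: real where C: "\<And>n. n \<ge> 1 \<Longrightarrow>
      r_inv F U n \<epsilon> Q \<noteq> \<infinity> \<and> real (the_enat (r_inv F U n \<epsilon> Q)) \<le> C"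
    using assms unfolding bounded_inv_complexity_def by meson
  have "\<exists>S. finite S \<and> card S \<le> nat \<lfloor>C\<rfloor> \<and> spanning F U n \<epsilon> Q S" for n
  proof -
    have bound: "r_inv F U (Suc n) \<epsilon> Q \<noteq> \<infinity>" "real (the_enat (r_inv F U (Suc n) \<epsilon> Q)) \<le> C"
      using C[of "Suc n"] by simp_all
    obtain S where S: "finite S" "spanning F U (Suc n) \<epsilon> Q S"
        "r_inv F U (Suc n) \<epsilon> Q = enat (card S)"
      using r_inv_attained[OF bound(1)] by blast
    have "real (card S) \<le> C"
      using bound(2) S(3) by simp
    then have "card S \<le> nat \<lfloor>C\<rfloor>"
      by linarith
    moreover have "spanning F U n \<epsilon> Q S"
      using spanning_mono[OF _ S(2)] by simp
    ultimately show ?thesis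
      using S(1) by blast
  qed
  then show ?thesis
    by blast
qed

lemma compact_ctrl_seqs:
  assumes "compact (U :: 'u::topological_space set)"
  shows "compact (ctrl_seqs U)"
proof -
  have "compactin (product_topology (\<lambda>_. euclidean) UNIV) (PiE UNIV (\<lambda>_::nat. U))"
    using assms by (subst compactin_PiE) auto
  moreover have "PiE UNIV (\<lambda>_::nat. U) = ctrl_seqs U"
    by (auto simp: ctrl_seqs_def PiE_def extensional_def Pi_def)
  ultimately show ?thesis
    by (simp add: euclidean_product_topology)
qed

lemma compact_decseq_Inter_nonempty:
  fixes C :: "nat \<Rightarrow> 'a::topological_space set"
  assumes "compact (C 0)" "\<And>n. closed (C n)" "\<And>n. C n \<noteq> {}" "decseq C"
  shows "\<Inter>(range C) \<noteq> {}"
proof -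
  have "C 0 \<inter> (\<Inter>n\<in>I. C n) \<noteq> {}" if "finite I" for I
  proof -
    have "C (Max (insert 0 I)) \<subseteq> C n" if "n \<in> insert 0 I" for n
      using \<open>decseq C\<close> \<open>finite I\<close> that by (simp add: decseq_def)
    then have "C (Max (insert 0 I)) \<subseteq> C 0 \<inter> (\<Inter>n\<in>I. C n)"
      by blast
    then show ?thesis
      using assms(3) by blast
  qed
  then have "C 0 \<inter> (\<Inter>n\<in>UNIV. C n) \<noteq> {}"
    by (rule compact_imp_fip_image[OF assms(1,2)])
  then show ?thesis
    by blast
qed

lemma ex_less_forall_if_forall_horizon:
  fixes P :: "nat \<Rightarrow> nat \<Rightarrow> bool"
  assumes "\<And>n. \<exists>i<N. \<forall>k<n. P i k"
  shows "\<exists>i<N. \<forall>k. P i k"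
proof (rule ccontr)
  assume "\<not> ?thesis"
  then obtain bad where bad: "\<And>i. i < N \<Longrightarrow> \<not> P i (bad i)"
    by metis
  define n where "n = Suc (Max (bad ` {..<N}))"
  obtain i where i: "i < N" "\<forall>k<n. P i k"
    using assms by blast
  have "bad i \<le> Max (bad ` {..<N})"
    using i(1) by (intro Max_ge) auto
  then have "bad i < n"
    unfolding n_def by simp
  then show False
    using i bad by blast
qed

text \<open>A single control sequence \<open>\<Omega>\<close> packs countably many: its i-th component reads \<open>\<Omega>\<close>
  along the i-th column of the Cantor pairing.\<close>

definition ctrl_component :: "nat \<Rightarrow> (nat \<Rightarrow> 'u) \<Rightarrow> nat \<Rightarrow> 'u" where
  "ctrl_component i \<Omega> = (\<lambda>k. \<Omega> (prod_encode (i, k)))"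

lemma ctrl_component_in_ctrl_seqs:
  "\<Omega> \<in> ctrl_seqs U \<Longrightarrow> ctrl_component i \<Omega> \<in> ctrl_seqs U"
  unfolding ctrl_seqs_def ctrl_component_def by auto

lemma continuous_on_ctrl_component:
  "continuous_on A (ctrl_component i :: (nat \<Rightarrow> 'u::topological_space) \<Rightarrow> _)"
  unfolding ctrl_component_def
  by (intro continuous_on_coordinatewise_then_product
      continuous_on_subset[OF continuous_on_product_coordinates]) simp

lemma ctrl_components_surj:
  assumes "\<And>i. g i \<in> ctrl_seqs U"
  shows "\<exists>\<Omega>\<in>ctrl_seqs U. \<forall>i. ctrl_component i \<Omega> = g i"
proof
  let ?\<Omega> = "\<lambda>m. g (fst (prod_decode m)) (snd (prod_decode m))"
  show "?\<Omega> \<in> ctrl_seqs U"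
    using assms unfolding ctrl_seqs_def by blast
  show "\<forall>i. ctrl_component i ?\<Omega> = g i"
    unfolding ctrl_component_def by simp
qed

text \<open>The non-strict inequality, i.e.\ the closed \<open>\<epsilon>\<close>-neighbourhood, is what makes these sets
  closed.\<close>

definition spanning_packings ::
  "('u \<Rightarrow> 'a \<Rightarrow> 'a) \<Rightarrow> 'u set \<Rightarrow> nat \<Rightarrow> nat \<Rightarrow> real \<Rightarrow> 'a::metric_space set \<Rightarrow> (nat \<Rightarrow> 'u) set" where
  "spanning_packings F U N n \<epsilon> Q = {\<Omega> \<in> ctrl_seqs U.
     \<forall>y\<in>Q. \<exists>i<N. \<forall>k<n. infdist (phi F k y (ctrl_component i \<Omega>)) Q \<le> \<epsilon>}"

lemma decseq_spanning_packings:
  "decseq (\<lambda>n. spanning_packings F U N n \<epsilon> Q)"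
  unfolding decseq_def spanning_packings_def by (auto 4 4)

lemma closed_spanning_packings:
  fixes F :: "'u::metric_space \<Rightarrow> 'a::metric_space \<Rightarrow> 'a"
  assumes "compact U"
    and phi_cont: "\<And>k. continuous_on (UNIV \<times> ctrl_seqs U) (\<lambda>(x, \<omega>). phi F k x \<omega>)"
  shows "closed (spanning_packings F U N n \<epsilon> Q)"
proof -
  let ?K = "ctrl_seqs U"
  have cont: "continuous_on ?K (\<lambda>\<Omega>. infdist (phi F k y (ctrl_component i \<Omega>)) Q)" for k y i
  proof -
    have "continuous_on ?K (\<lambda>\<Omega>. (y, ctrl_component i \<Omega>))"
      by (intro continuous_intros continuous_on_ctrl_component)
    moreover have "(\<lambda>\<Omega>. (y, ctrl_component i \<Omega>)) ` ?K \<subseteq> UNIV \<times> ?K"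
      using ctrl_component_in_ctrl_seqs by auto
    ultimately have "continuous_on ?K ((\<lambda>(x, \<omega>). phi F k x \<omega>) \<circ> (\<lambda>\<Omega>. (y, ctrl_component i \<Omega>)))"
      by (intro continuous_on_compose continuous_on_subset[OF phi_cont])
    then show ?thesis
      by (intro continuous_on_infdist) (simp add: o_def)
  qed
  have closed_K: "closed ?K"
    using assms(1) by (intro compact_imp_closed compact_ctrl_seqs)
  have "spanning_packings F U N n \<epsilon> Q = ?K \<inter> (\<Inter>y\<in>Q. \<Union>i\<in>{..<N}. \<Inter>k\<in>{..<n}.
          ?K \<inter> (\<lambda>\<Omega>. infdist (phi F k y (ctrl_component i \<Omega>)) Q) -` {..\<epsilon>})"
    unfolding spanning_packings_def by (auto; blast)
  also have "closed \<dots>"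
    by (intro closed_Int closed_K closed_INT ballI closed_UN finite_lessThan
        continuous_closed_preimage cont closed_atMost)
  finally show ?thesis .
qed

lemma spanning_packings_nonempty:
  assumes "finite S" "card S \<le> N" "spanning F U n \<epsilon> Q S" "Q \<noteq> {}"
  shows "spanning_packings F U N n \<epsilon> Q \<noteq> {}"
proof -
  have S_ctrl: "S \<subseteq> ctrl_seqs U" and cover: "Q \<subseteq> (\<Union>\<omega>\<in>S. Qset F Q n \<epsilon> \<omega>)"
    using assms(3) unfolding spanning_iff_covered by auto
  have "S \<noteq> {}"
    using cover assms(4) by auto
  then have "from_nat_into S i \<in> ctrl_seqs U" for i
    using S_ctrl from_nat_into[OF \<open>S \<noteq> {}\<close>] by blast
  then obtain \<Omega> where \<Omega>: "\<Omega> \<in> ctrl_seqs U" "\<And>i. ctrl_component i \<Omega> = from_nat_into S i"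
    using ctrl_components_surj[of "from_nat_into S" U] by blast
  have "\<exists>i<N. \<forall>k<n. infdist (phi F k y (ctrl_component i \<Omega>)) Q \<le> \<epsilon>" if "y \<in> Q" for y
  proof -
    obtain \<omega> where \<omega>: "\<omega> \<in> S" "y \<in> Qset F Q n \<epsilon> \<omega>"
      using cover \<open>y \<in> Q\<close> by blast
    have "to_nat_on S \<omega> < card S"
      using bij_betw_apply[OF to_nat_on_finite[OF assms(1)] \<omega>(1)] by simp
    then have "to_nat_on S \<omega> < N"
      using assms(2) by linarith
    moreover have "ctrl_component (to_nat_on S \<omega>) \<Omega> = \<omega>"
      using \<Omega>(2) \<omega>(1) assms(1) by (simp add: countable_finite)
    moreover have "infdist (phi F k y \<omega>) Q \<le> \<epsilon>" if "k < n" for k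
      using \<omega>(2) that unfolding Qset_def nbhd_def by (force simp: image_subset_iff)
    ultimately show ?thesis
      by metis
  qed
  then have "\<Omega> \<in> spanning_packings F U N n \<epsilon> Q"
    unfolding spanning_packings_def using \<Omega>(1) by blast
  then show ?thesis
    by blast
qed

lemma bounded_spanning_imp_invariance_cover:
  fixes F :: "'u::metric_space \<Rightarrow> 'a::metric_space \<Rightarrow> 'a"
  assumes "compact U"
    and phi_cont: "\<And>k. continuous_on (UNIV \<times> ctrl_seqs U) (\<lambda>(x, \<omega>). phi F k x \<omega>)"
    and "Q \<noteq> {}"
    and spanning: "\<And>n. \<exists>S. finite S \<and> card S \<le> N \<and> spanning F U n \<epsilon> Q S"
    and "\<epsilon> < \<epsilon>'"
  shows "\<exists>S. finite S \<and> invariance_cover F U \<epsilon>' Q S"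
proof -
  let ?P = "\<lambda>n. spanning_packings F U N n \<epsilon> Q"
  have "compact (ctrl_seqs U \<inter> ?P 0)"
    by (intro compact_Int_closed compact_ctrl_seqs closed_spanning_packings assms(1) phi_cont)
  moreover have "ctrl_seqs U \<inter> ?P 0 = ?P 0"
    unfolding spanning_packings_def by blast
  ultimately have "compact (?P 0)"
    by simp
  moreover have "?P n \<noteq> {}" for n
  proof -
    obtain S where "finite S" "card S \<le> N" "spanning F U n \<epsilon> Q S"
      using spanning by blast
    then show ?thesis
      using assms(3) by (rule spanning_packings_nonempty)
  qed
  ultimately have "\<Inter>(range ?P) \<noteq> {}"
    using closed_spanning_packings[OF assms(1) phi_cont] decseq_spanning_packings
    by (intro compact_decseq_Inter_nonempty)
  then obtain \<Omega> where \<Omega>: "\<And>n. \<Omega> \<in> ?P n"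
    by blast
  let ?S = "(\<lambda>i. ctrl_component i \<Omega>) ` {..<N}"
  have "invariance_cover F U \<epsilon>' Q ?S"
    unfolding invariance_cover_def
  proof
    show "?S \<subseteq> ctrl_seqs U"
      using \<Omega>[of 0] ctrl_component_in_ctrl_seqs unfolding spanning_packings_def by blast
    show "\<forall>y\<in>Q. \<exists>\<omega>\<in>?S. range (\<lambda>k. phi F k y \<omega>) \<subseteq> nbhd \<epsilon>' Q"
    proof
      fix y assume "y \<in> Q"
      then have "\<exists>i<N. \<forall>k<n. infdist (phi F k y (ctrl_component i \<Omega>)) Q \<le> \<epsilon>" for n
        using \<Omega>[of n] unfolding spanning_packings_def by blast
      then have "\<exists>i<N. \<forall>k. infdist (phi F k y (ctrl_component i \<Omega>)) Q \<le> \<epsilon>"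
        by (rule ex_less_forall_if_forall_horizon)
      then obtain i where i: "i < N" "\<forall>k. infdist (phi F k y (ctrl_component i \<Omega>)) Q \<le> \<epsilon>"
        by blast
      have "range (\<lambda>k. phi F k y (ctrl_component i \<Omega>)) \<subseteq> nbhd \<epsilon>' Q"
        using i(2) \<open>\<epsilon> < \<epsilon>'\<close> unfolding nbhd_def by (auto intro: le_less_trans)
      then show "\<exists>\<omega>\<in>?S. range (\<lambda>k. phi F k y \<omega>) \<subseteq> nbhd \<epsilon>' Q"
        using i(1) by blast
    qed
  qed
  moreover have "finite ?S"
    by simp
  ultimately show ?thesis
    by blast
qed

theorem mainTheorem1:
  fixes F :: "'u::metric_space \<Rightarrow> 'a::metric_space \<Rightarrow> 'a"
    and U :: "'u set" and Q :: "'a set"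
  assumes U_compact: "compact U"
    and F_cont: "\<And>u. u \<in> U \<Longrightarrow> continuous_on UNIV (F u)"
    and phi_cont: "\<And>k. continuous_on (UNIV \<times> ctrl_seqs U) (\<lambda>(x, \<omega>). phi F k x \<omega>)"
    and Q_ne: "Q \<noteq> {}" and Q_compact: "compact Q"
  shows "fin_equi_inv F U Q \<longleftrightarrow> bounded_inv_complexity F U Q"
proof
  assume "fin_equi_inv F U Q"
  then have "\<forall>\<epsilon>>0. \<exists>S. finite S \<and> invariance_cover F U \<epsilon> Q S"
    using fin_equi_inv_imp_invariance_cover[OF Q_compact] by blast
  then show "bounded_inv_complexity F U Q"
    by (rule invariance_covers_imp_bounded_inv_complexity)
next
  assume bounded: "bounded_inv_complexity F U Q"
  have "\<exists>S. finite S \<and> invariance_cover F U \<epsilon> Q S" if "\<epsilon> > 0" for \<epsilon>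
  proof -
    have "\<epsilon> / 2 > 0" "\<epsilon> / 2 < \<epsilon>"
      using that by simp_all
    moreover obtain N where "\<And>n. \<exists>S. finite S \<and> card S \<le> N \<and> spanning F U n (\<epsilon> / 2) Q S"
      using bounded_inv_complexity_imp_bounded_spanning[OF bounded \<open>\<epsilon> / 2 > 0\<close>] by blast
    ultimately show ?thesis
      using bounded_spanning_imp_invariance_cover[OF U_compact phi_cont Q_ne] by blast
  qed
  then show "fin_equi_inv F U Q"
    by (intro invariance_covers_imp_fin_equi_inv allI impI)
qed

end
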